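(* Let $\bar x \in \mathrm{dom}\,\psi$, let $H > 0$, let $F'(\bar x) \in \partial F(\bar x)$ be a chosen subgradient with $F'(\bar x) \neq 0$, and let $A = A_H(\bar x) = \frac{1}{\sigma}\sqrt{\frac{H}{3}\|F'(\bar x)\|_*}$. Then $$H\, \|T_A(\bar x) - \bar x\| \;\leq\; 3\sigma A.$$
   Context: $\mathbb{E}$ is a finite-dimensional real vector space with an arbitrary norm $\|\cdot\|$; $\mathbb{E}^*$ is its dual with dual norm $\|g\|_* = \max\{\langle g, x\rangle : \|x\|\le 1\}$. $F = f + \psi$, where $\psi$ is a closed convex function with $\mathrm{dom}\,\psi \subseteq \mathbb{E}$ and $f$ is convex and twice continuously differentiable; subgradients of $F$ have the form $F'(\bar x) = \nabla f(\bar x) + \psi'(\bar x)$ with $\psi'(\bar x) \in \partial \psi(\bar x)$. The scaling function $d$ is differentiable and satisfies, for some $\sigma\in(0,1]$ and all $x,y \in \mathrm{dom}\,\psi$: $d(y) \ge d(x) + \langle \nabla d(x), y-x\rangle + \frac{\sigma}{2}\|y-x\|^2$ and $\|\nabla d(x) - \nabla d(y)\|_* \le \|x-y\|$. Bregman distance: $\rho(x,y) = d(y) - d(x) - \langle \nabla d(x), y-x\rangle$. For $A>0$, $$T_A(\bar x) = \arg\min_{y\in\mathrm{dom}\,\psi}\Big[ f(\bar x) + \langle \nabla f(\bar x), y-\bar x\rangle + \tfrac12 \langle \nabla^2 f(\bar x)(y-\bar x), y-\bar x\rangle + A\rho(\bar x,y) + \psi(y)\Big].$$ *)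

theory Defs
  imports "HOL-Analysis.Analysis"
begin

text \<open>The space E is modelled by a Euclidean space type 'a; the arbitrary norm of E is a
  separate function nrm.  The dual space E* is identified with 'a via the inner product,
  so the pairing of g with x is the inner product of g and x.\<close>

definition is_norm :: "('a::real_vector \<Rightarrow> real) \<Rightarrow> bool" where
  "is_norm nrm \<longleftrightarrow>
     (\<forall>x. nrm x = 0 \<longleftrightarrow> x = 0) \<and>
     (\<forall>x y. nrm (x + y) \<le> nrm x + nrm y) \<and>
     (\<forall>c x. nrm (c *\<^sub>R x) = \<bar>c\<bar> * nrm x)"

definition dual_norm :: "('a::real_inner \<Rightarrow> real) \<Rightarrow> 'a \<Rightarrow> real" where
  "dual_norm nrm g = Sup {g \<bullet> x | x. nrm x \<le> 1}"

text \<open>Closed convex function psi with effective domain D (psi is +infinity outside D):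
  D convex, psi convex on D, epigraph closed.\<close>
definition closed_convex_fun :: "'a::real_normed_vector set \<Rightarrow> ('a \<Rightarrow> real) \<Rightarrow> bool" where
  "closed_convex_fun D psi \<longleftrightarrow> convex D \<and> convex_on D psi \<and>
     closed {(x, t). x \<in> D \<and> psi x \<le> t}"

definition bregman :: "('a::real_inner \<Rightarrow> real) \<Rightarrow> ('a \<Rightarrow> 'a) \<Rightarrow> 'a \<Rightarrow> 'a \<Rightarrow> real" where
  "bregman d Dd x y = d y - d x - Dd x \<bullet> (y - x)"

definition model ::
  "('a::real_inner \<Rightarrow> real) \<Rightarrow> ('a \<Rightarrow> 'a) \<Rightarrow> ('a \<Rightarrow> 'a \<Rightarrow>\<^sub>L 'a) \<Rightarrow> ('a \<Rightarrow> real)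
    \<Rightarrow> ('a \<Rightarrow> 'a) \<Rightarrow> ('a \<Rightarrow> real) \<Rightarrow> real \<Rightarrow> 'a \<Rightarrow> 'a \<Rightarrow> real" where
  "model f Df D2f d Dd psi A xbar y =
     f xbar + Df xbar \<bullet> (y - xbar) + (1/2) * ((D2f xbar) (y - xbar) \<bullet> (y - xbar))
     + A * bregman d Dd xbar y + psi y"

definition is_T :: "'a::real_inner set \<Rightarrow> ('a \<Rightarrow> real) \<Rightarrow> ('a \<Rightarrow> 'a) \<Rightarrow> ('a \<Rightarrow> 'a \<Rightarrow>\<^sub>L 'a)
    \<Rightarrow> ('a \<Rightarrow> real) \<Rightarrow> ('a \<Rightarrow> 'a) \<Rightarrow> ('a \<Rightarrow> real) \<Rightarrow> real \<Rightarrow> 'a \<Rightarrow> 'a \<Rightarrow> bool" where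
  "is_T D f Df D2f d Dd psi A xbar T \<longleftrightarrow> T \<in> D \<and>
     (\<forall>y\<in>D. model f Df D2f d Dd psi A xbar T \<le> model f Df D2f d Dd psi A xbar y)"

end

theory Submission imports Defs begin

text \<open>Write \<open>h = T - xbar\<close> and \<open>r = nrm h\<close>. Since \<open>T\<close> minimizes the smooth model
  plus the convex \<open>psi\<close> over \<open>D\<close>, the directional derivative of the smooth part at \<open>T\<close>
  towards \<open>xbar\<close> is at least \<open>psi T - psi xbar \<ge> s \<bullet> h\<close>. Convexity of \<open>f\<close> makes the
  Hessian term nonnegative and strong convexity of \<open>d\<close> gives
  \<open>(Dd T - Dd xbar) \<bullet> h \<ge> \<sigma> r\<^sup>2\<close>, hence \<open>A \<sigma> r\<^sup>2 \<le> - F'(xbar) \<bullet> h \<le> \<parallel>F'(xbar)\<parallel>\<^sub>* r\<close>.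
  With \<open>3 (\<sigma> A)\<^sup>2 = H \<parallel>F'(xbar)\<parallel>\<^sub>*\<close> this is \<open>H r \<le> 3 \<sigma> A\<close>.\<close>

lemma is_normD:
  assumes "is_norm nrm"
  shows "nrm x = 0 \<longleftrightarrow> x = 0" "nrm (x + y) \<le> nrm x + nrm y" "nrm (c *\<^sub>R x) = \<bar>c\<bar> * nrm x"
  using assms unfolding is_norm_def by auto

lemma is_norm_minus:
  assumes "is_norm nrm"
  shows "nrm (- x) = nrm x"
  using is_normD(3)[OF assms, of "-1" x] by simp

lemma is_norm_zero:
  assumes "is_norm nrm"
  shows "nrm 0 = 0"
  using is_normD(1)[OF assms] by simp

lemma is_norm_nonneg:
  assumes "is_norm nrm"
  shows "0 \<le> nrm x"
  using is_normD(2)[OF assms, of x "- x"] is_norm_minus[OF assms, of x] is_norm_zero[OF assms] by simp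

lemma is_norm_convex:
  assumes "is_norm nrm"
  shows "convex_on UNIV nrm"
proof (rule convex_onI)
  fix t :: real and x y assume "0 < t" "t < 1"
  have "nrm ((1 - t) *\<^sub>R x + t *\<^sub>R y) \<le> nrm ((1 - t) *\<^sub>R x) + nrm (t *\<^sub>R y)"
    by (rule is_normD(2)[OF assms])
  also have "\<dots> = (1 - t) * nrm x + t * nrm y"
    using \<open>0 < t\<close> \<open>t < 1\<close> by (simp add: is_normD(3)[OF assms])
  finally show "nrm ((1 - t) *\<^sub>R x + t *\<^sub>R y) \<le> (1 - t) * nrm x + t * nrm y" .
qed simp

lemma is_norm_ge_norm:
  fixes nrm :: "'a::euclidean_space \<Rightarrow> real"
  assumes "is_norm nrm"
  obtains m where "m > 0" "\<And>x. m * norm x \<le> nrm x"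
proof -
  have "continuous_on (sphere 0 1) nrm"
    using convex_on_continuous[OF open_UNIV is_norm_convex[OF assms]] continuous_on_subset by blast
  moreover have "sphere (0::'a) 1 \<noteq> {}" by simp
  ultimately obtain z where z: "z \<in> sphere (0::'a) 1" and min: "\<And>y. y \<in> sphere 0 1 \<Longrightarrow> nrm z \<le> nrm y"
    using continuous_attains_inf[OF compact_sphere] by blast
  have "0 < nrm z"
    using z is_normD(1)[OF assms, of z] is_norm_nonneg[OF assms, of z] by fastforce
  moreover have "nrm z * norm x \<le> nrm x" for x
  proof (cases "x = 0")
    case False
    then have "nrm z \<le> nrm ((1 / norm x) *\<^sub>R x)" by (intro min) simp
    also have "\<dots> = nrm x / norm x" using is_normD(3)[OF assms] by simp
    finally show ?thesis using False by (simp add: field_simps)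
  qed (use is_norm_zero[OF assms] in simp)
  ultimately show thesis using that by blast
qed

lemma inner_le_dual_norm:
  fixes nrm :: "'a::euclidean_space \<Rightarrow> real"
  assumes "is_norm nrm"
  shows "g \<bullet> x \<le> dual_norm nrm g * nrm x"
proof -
  obtain m where m: "m > 0" "\<And>x. m * norm x \<le> nrm x" using is_norm_ge_norm[OF assms] by blast
  have bdd: "bdd_above {g \<bullet> x | x. nrm x \<le> 1}"
  proof (rule bdd_aboveI[of _ "norm g / m"], clarify)
    fix x :: 'a assume "nrm x \<le> 1"
    then have "m * norm x \<le> 1" using m(2)[of x] by linarith
    then have "norm g * (m * norm x) \<le> norm g" using mult_left_mono[of _ 1 "norm g"] by simp
    then have "norm g * norm x \<le> norm g / m" using m(1) by (simp add: field_simps)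
    then show "g \<bullet> x \<le> norm g / m" using Cauchy_Schwarz_ineq2[of g x] by simp
  qed
  show ?thesis
  proof (cases "x = 0")
    case False
    then have pos: "nrm x > 0"
      using is_normD(1)[OF assms, of x] is_norm_nonneg[OF assms, of x] by simp
    then have "nrm ((1 / nrm x) *\<^sub>R x) \<le> 1" using is_normD(3)[OF assms] by simp
    then have "g \<bullet> ((1 / nrm x) *\<^sub>R x) \<le> dual_norm nrm g"
      unfolding dual_norm_def by (intro cSup_upper bdd) blast
    then show ?thesis using pos by (simp add: field_simps)
  qed (use is_norm_zero[OF assms] in simp)
qed

lemma dual_norm_pos:
  fixes nrm :: "'a::euclidean_space \<Rightarrow> real"
  assumes "is_norm nrm" "g \<noteq> 0"
  shows "0 < dual_norm nrm g"
proof -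
  have "0 < g \<bullet> g" using assms(2) by simp
  also have "\<dots> \<le> dual_norm nrm g * nrm g" by (rule inner_le_dual_norm[OF assms(1)])
  finally show ?thesis
    using is_norm_nonneg[OF assms(1), of g] by (simp add: zero_less_mult_iff)
qed

lemma derivative_ge_of_segment:
  fixes g :: "'a::real_normed_vector \<Rightarrow> real"
  assumes g': "(g has_derivative g') (at x)"
    and quot: "\<And>t. 0 < t \<Longrightarrow> t \<le> 1 \<Longrightarrow> t * c \<le> g (x + t *\<^sub>R v) - g x"
  shows "c \<le> g' v"
proof (rule ccontr)
  assume "\<not> c \<le> g' v"
  define u where "u t = g (x + t *\<^sub>R v) - t * c" for t
  have line: "((\<lambda>t. x + t *\<^sub>R v) has_derivative (\<lambda>t. t *\<^sub>R v)) (at 0)"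
    by (auto intro!: derivative_eq_intros)
  have "(g has_derivative g') (at (x + 0 *\<^sub>R v))" using g' by simp
  from has_derivative_compose[OF line this]
  have "((\<lambda>t. g (x + t *\<^sub>R v)) has_derivative (\<lambda>t. t * g' v)) (at 0)"
    using linear_cmul[OF has_derivative_linear[OF g']] by simp
  then have "(u has_real_derivative (g' v - c)) (at 0)"
    unfolding u_def has_field_derivative_def
    by (auto intro!: derivative_eq_intros simp: algebra_simps)
  moreover have "g' v - c < 0" using \<open>\<not> c \<le> g' v\<close> by simp
  ultimately obtain e where "e > 0" and dec: "\<forall>h>0. h < e \<longrightarrow> u (0 + h) < u 0"
    using DERIV_neg_dec_right by blast
  define t where "t = min 1 (e / 2)"
  have "0 < t" "t \<le> 1" "t < e" using \<open>e > 0\<close> unfolding t_def by auto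
  then have "u 0 \<le> u t" using quot[of t] unfolding u_def by simp
  with dec \<open>0 < t\<close> \<open>t < e\<close> show False by fastforce
qed

lemma convex_on_gradient_ineq:
  assumes "convex_on D f" "x \<in> D" "y \<in> D" "(f has_derivative f') (at x)"
  shows "f x + f' (y - x) \<le> f y"
proof -
  have "f x - f y \<le> - f' (y - x)"
  proof (rule derivative_ge_of_segment[where g = "\<lambda>z. - f z"])
    show "((\<lambda>z. - f z) has_derivative (\<lambda>h. - f' h)) (at x)"
      using assms(4) by (rule derivative_intros)
    fix t :: real assume "0 < t" "t \<le> 1"
    then have "f ((1 - t) *\<^sub>R x + t *\<^sub>R y) \<le> (1 - t) * f x + t * f y"
      using assms(1-3) by (intro convex_onD) auto
    moreover have "(1 - t) *\<^sub>R x + t *\<^sub>R y = x + t *\<^sub>R (y - x)" by (simp add: algebra_simps)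
    ultimately show "t * (f x - f y) \<le> - f (x + t *\<^sub>R (y - x)) - - f x"
      by (simp add: algebra_simps)
  qed
  then show ?thesis by simp
qed

lemma convex_on_gradient_monotone:
  assumes "convex_on D f" "x \<in> D" "y \<in> D"
    and "\<And>z. z \<in> D \<Longrightarrow> (f has_derivative (\<lambda>h. Df z \<bullet> h)) (at z)"
  shows "0 \<le> (Df y - Df x) \<bullet> (y - x)"
  using convex_on_gradient_ineq[OF assms(1-3) assms(4)[OF assms(2)]]
    convex_on_gradient_ineq[OF assms(1,3,2) assms(4)[OF assms(3)]]
  by (simp add: inner_diff_left inner_diff_right inner_commute)

lemma convex_hessian_psd:
  assumes "convex_on UNIV f" "\<And>z. (f has_derivative (\<lambda>h. Df z \<bullet> h)) (at z)"
    and "(Df has_derivative blinfun_apply Q) (at x)"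
  shows "0 \<le> Q h \<bullet> h"
proof (rule derivative_ge_of_segment[where g = "\<lambda>z. Df z \<bullet> h" and g' = "\<lambda>k. Q k \<bullet> h"])
  show "((\<lambda>z. Df z \<bullet> h) has_derivative (\<lambda>k. Q k \<bullet> h)) (at x)"
    using assms(3) by (auto intro!: derivative_eq_intros)
  fix t :: real assume "0 < t" "t \<le> 1"
  have "0 \<le> (Df (x + t *\<^sub>R h) - Df x) \<bullet> (t *\<^sub>R h)"
    using convex_on_gradient_monotone[OF assms(1) UNIV_I UNIV_I assms(2), of x "x + t *\<^sub>R h"]
    by (simp add: inner_diff_left algebra_simps)
  with \<open>0 < t\<close> show "t * 0 \<le> Df (x + t *\<^sub>R h) \<bullet> h - Df x \<bullet> h"
    by (simp add: inner_diff_left zero_le_mult_iff)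
qed

lemma strongly_convex_gradient_monotone:
  assumes "is_norm nrm" "x \<in> D" "y \<in> D"
    and strong: "\<And>x y. x \<in> D \<Longrightarrow> y \<in> D \<Longrightarrow>
                   d y \<ge> d x + Dd x \<bullet> (y - x) + \<sigma> / 2 * (nrm (y - x))\<^sup>2"
  shows "\<sigma> * (nrm (y - x))\<^sup>2 \<le> (Dd y - Dd x) \<bullet> (y - x)"
proof -
  have "nrm (x - y) = nrm (y - x)" using is_norm_minus[OF assms(1), of "y - x"] by simp
  then show ?thesis using strong[OF assms(2,3)] strong[OF assms(3,2)]
    by (simp add: inner_diff_left inner_diff_right inner_commute)
qed

lemma first_order_optimality:
  assumes "convex_on D psi" "T \<in> D" "y \<in> D" "(phi has_derivative phi') (at T)"
    and min: "\<And>z. z \<in> D \<Longrightarrow> phi T + psi T \<le> phi z + psi z"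
  shows "psi T - psi y \<le> phi' (y - T)"
proof (rule derivative_ge_of_segment[OF assms(4)])
  fix t :: real assume "0 < t" "t \<le> 1"
  define z where "z = (1 - t) *\<^sub>R T + t *\<^sub>R y"
  have "convex D" using assms(1) by (rule convex_on_imp_convex)
  then have "z \<in> D" "psi z \<le> (1 - t) * psi T + t * psi y"
    using assms(1-3) \<open>0 < t\<close> \<open>t \<le> 1\<close> unfolding z_def by (auto intro: convex_onD convexD)
  moreover have "T + t *\<^sub>R (y - T) = z" unfolding z_def by (simp add: algebra_simps)
  ultimately show "t * (psi T - psi y) \<le> phi (T + t *\<^sub>R (y - T)) - phi T"
    using min[of z] by (simp add: algebra_simps)
qed

lemma is_T_first_order:
  assumes T: "is_T D f Df D2f d Dd psi A xbar T"
    and psi: "convex_on D psi" and xbar: "xbar \<in> D"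
    and d': "(d has_derivative (\<lambda>k. Dd T \<bullet> k)) (at T)"
  shows "Df xbar \<bullet> (T - xbar) + D2f xbar (T - xbar) \<bullet> (T - xbar)
           + A * ((Dd T - Dd xbar) \<bullet> (T - xbar)) \<le> psi xbar - psi T"
proof -
  define h where "h = T - xbar"
  define Q where "Q = D2f xbar"
  define phi where "phi y = f xbar + Df xbar \<bullet> (y - xbar) + 1/2 * (Q (y - xbar) \<bullet> (y - xbar))
                             + A * bregman d Dd xbar y" for y
  define phi' where "phi' k = Df xbar \<bullet> k + 1/2 * (Q k \<bullet> h + Q h \<bullet> k)
                              + A * (Dd T \<bullet> k - Dd xbar \<bullet> k)" for k
  have "(phi has_derivative phi') (at T)"
    unfolding phi_def phi'_def bregman_def h_def
    using d' by (auto intro!: derivative_eq_intros simp: algebra_simps)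
  moreover have "T \<in> D" "\<And>z. z \<in> D \<Longrightarrow> phi T + psi T \<le> phi z + psi z"
    using T unfolding is_T_def model_def phi_def Q_def by auto
  ultimately have "psi T - psi xbar \<le> phi' (xbar - T)"
    using first_order_optimality[OF psi _ xbar] by blast
  moreover have "xbar - T = - h" unfolding h_def by simp
  ultimately show ?thesis
    unfolding phi'_def h_def[symmetric] Q_def[symmetric]
    by (simp add: blinfun.minus_right inner_diff_left algebra_simps)
qed

lemma step_bound_of_quadratic_le_linear:
  fixes a r G H :: real
  assumes "a * r\<^sup>2 \<le> G * r" "3 * a\<^sup>2 = H * G" "0 < a" "0 < G" "0 \<le> r" "0 \<le> H"
  shows "H * r \<le> 3 * a"
proof -
  have "a * r \<le> G"
  proof (cases "r = 0")
    case False
    with assms(1,5) show ?thesis by (simp add: power2_eq_square)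
  qed (use assms(4) in simp)
  then have "H * (a * r) \<le> H * G" using assms(6) by (rule mult_left_mono)
  also have "\<dots> = a * (3 * a)" using assms(2) by (simp add: power2_eq_square)
  finally have "a * (H * r) \<le> a * (3 * a)" by (simp add: mult.left_commute)
  then show ?thesis using assms(3) by (rule mult_left_le_imp_le)
qed

theorem corollary1:
  fixes nrm :: "'a::euclidean_space \<Rightarrow> real"
    and f d :: "'a \<Rightarrow> real" and Df Dd :: "'a \<Rightarrow> 'a" and D2f :: "'a \<Rightarrow> ('a \<Rightarrow>\<^sub>L 'a)"
    and psi :: "'a \<Rightarrow> real" and D :: "'a set"
    and \<sigma> H A :: real and xbar s T :: 'a
  assumes norm: "is_norm nrm"
    and f_grad: "\<And>x. (f has_derivative (\<lambda>h. Df x \<bullet> h)) (at x)"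
    and f_hess: "\<And>x. (Df has_derivative blinfun_apply (D2f x)) (at x)"
    and f_hess_cont: "continuous_on UNIV D2f"
    and f_convex: "convex_on UNIV f"
    and psi_closed_convex: "closed_convex_fun D psi"
    and d_grad: "\<And>x. x \<in> D \<Longrightarrow> (d has_derivative (\<lambda>h. Dd x \<bullet> h)) (at x)"
    and sigma: "0 < \<sigma>" "\<sigma> \<le> 1"
    and d_strong: "\<And>x y. x \<in> D \<Longrightarrow> y \<in> D \<Longrightarrow>
                     d y \<ge> d x + Dd x \<bullet> (y - x) + \<sigma> / 2 * (nrm (y - x))\<^sup>2"
    and d_lip: "\<And>x y. x \<in> D \<Longrightarrow> y \<in> D \<Longrightarrow> dual_norm nrm (Dd x - Dd y) \<le> nrm (x - y)"
    and xbar: "xbar \<in> D"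
    and H: "H > 0"
    and s_subgrad: "\<And>y. y \<in> D \<Longrightarrow> psi y \<ge> psi xbar + s \<bullet> (y - xbar)"
    and Fp_nz: "Df xbar + s \<noteq> 0"
    and A_def: "A = (1 / \<sigma>) * sqrt (H / 3 * dual_norm nrm (Df xbar + s))"
    and T: "is_T D f Df D2f d Dd psi A xbar T"
  shows "H * nrm (T - xbar) \<le> 3 * \<sigma> * A"
proof -
  define h where "h = T - xbar"
  define r where "r = nrm h"
  define G where "G = dual_norm nrm (Df xbar + s)"
  have TD: "T \<in> D" using T unfolding is_T_def by simp
  have psi: "convex_on D psi" using psi_closed_convex unfolding closed_convex_fun_def by simp
  have "G > 0" unfolding G_def using dual_norm_pos[OF norm Fp_nz] .
  then have "\<sigma> * A > 0" and A_sq: "3 * (\<sigma> * A)\<^sup>2 = H * G"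
    using A_def sigma H unfolding G_def by simp_all
  have "A * (\<sigma> * r\<^sup>2) \<le> A * ((Dd T - Dd xbar) \<bullet> h)"
    using strongly_convex_gradient_monotone[OF norm xbar TD d_strong] \<open>\<sigma> * A > 0\<close> sigma
    unfolding r_def h_def by (simp add: zero_less_mult_iff)
  also have "\<dots> \<le> - ((Df xbar + s) \<bullet> h)"
    using is_T_first_order[OF T psi xbar d_grad[OF TD]] s_subgrad[OF TD]
      convex_hessian_psd[OF f_convex f_grad f_hess, of xbar h]
    unfolding h_def by (simp add: inner_add_left)
  also have "\<dots> = (Df xbar + s) \<bullet> (- h)" by simp
  also have "\<dots> \<le> G * r"
    using inner_le_dual_norm[OF norm] is_norm_minus[OF norm] unfolding G_def r_def by metis
  finally have "(\<sigma> * A) * r\<^sup>2 \<le> G * r" by (simp add: algebra_simps)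
  then have "H * r \<le> 3 * (\<sigma> * A)"
    using step_bound_of_quadratic_le_linear[OF _ A_sq \<open>\<sigma> * A > 0\<close> \<open>G > 0\<close>] H
      is_norm_nonneg[OF norm] unfolding r_def by simp
  then show ?thesis unfolding r_def h_def by (simp add: mult.assoc)
qed

end
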